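(* Let $p$ be an odd prime, $q$ a power of $p$, $E/\mathbb F_p$ a finite extension, $\psi$ a nontrivial additive character of $\mathbb F_p$, and $\tilde f(x)=\sum_{i=0}^na_ix^{(q^i+1)/2}$ with $a_i\in E$. Let $\mathbb K$ be the unique quadratic subfield of $\mathbb Q(\zeta_p)$ and $\mathrm{Gauss}_{\mathbb F_p}$ a quadratic Gauss sum over $\mathbb F_p$. Then the sums $$S_{\tilde f,+}=\frac{-1}{(\mathrm{Gauss}_{\mathbb F_p})^{\deg(E/\mathbb F_p)}}\sum_{x\in E}\psi_E(\tilde f(x)),\qquad S_{\tilde f,-}=\frac{-1}{(\mathrm{Gauss}_{\mathbb F_p})^{\deg(E/\mathbb F_p)}}\sum_{x\in E}\psi_E(\tilde f(x))\chi_2(x)$$ both lie in $\mathbb K$. If moreover $q$ is a square and $E\supseteq\mathbb F_q$, both lie in $\mathbb Q$.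
   Context: $\psi_E=\psi\circ\mathrm{Tr}_{E/\mathbb F_p}$, $\chi_2$ is the quadratic character of $E^\times$ (extended by $\chi_2(0)=0$), and $\mathrm{Gauss}_{\mathbb F_p}=\sum_{x\in\mathbb F_p^\times}\psi(x)\chi_2(x)$. *)

theory Defs
  imports "HOL-Analysis.Analysis" "HOL-Number_Theory.Number_Theory"
begin

text \<open>Absolute trace Tr_{E/F_p}(x) = sum_{i<d} x^(p^i), where |E| = p^d.\<close>
definition abs_trace :: "nat \<Rightarrow> nat \<Rightarrow> 'a::field \<Rightarrow> 'a" where
  "abs_trace p d x = (\<Sum>i<d. x ^ (p ^ i))"

definition quad_char :: "'a::field \<Rightarrow> complex" where
  "quad_char x = (if x = 0 then 0 else if (\<exists>y. y ^ 2 = x) then 1 else -1)"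

text \<open>Quadratic Gauss sum over F_p, F_p realised as the prime subfield {of_nat m | m < p}
  of E, with the quadratic character of F_p given by the Legendre symbol.\<close>
definition gauss_Fp :: "nat \<Rightarrow> ('a::field \<Rightarrow> complex) \<Rightarrow> complex" where
  "gauss_Fp p \<psi> = (\<Sum>m\<in>{1..<p}. \<psi> (of_nat m) * of_int (Legendre (int m) (int p)))"

text \<open>The unique quadratic subfield of Q(zeta_p), i.e. Q(sqrt(p*)), p* = (-1)^((p-1)/2) p.\<close>
definition quad_subfield :: "nat \<Rightarrow> complex set" where
  "quad_subfield p = {of_rat a + of_rat b * csqrt (of_int ((-1) ^ ((p - 1) div 2) * int p)) | a b. True}"

end

theory Submission
  imports Defs
begin

(*
  The trace maps E onto F_p, so grouping by y = Tr(f x) writes either sum as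
  sum_{y in F_p} psi(y) N(y) with rational fibre weights N(y). If t^q = t then c = t^2
  satisfies c^((q^i+1)/2) = c, hence f(c x) = c f(x); as Tr is F_p-linear and chi_2 is
  invariant under nonzero squares, N(c y) = N(y). Taking t in F_p^* makes N constant on the
  square classes of F_p^*, so the sum is a rational combination of 1 and the Gauss sum G,
  with G^2 = (-1)^((p-1)/2) p; dividing by G^deg stays in Q(G) = K. If q is a square and
  F_q is contained in E, every c in F_p^* is t^2 with t in F_(p^2), a subfield of F_q, so
  N is constant on F_p^*, the sum is rational, and so is G^deg = (G^2)^(deg/2).
*)

lemma
  fixes c :: "'a::idom"
  assumes "m < n"
  shows finite_power_eq: "finite {z. z ^ n = c * z ^ m}"
    and card_power_eq_le: "card {z. z ^ n = c * z ^ m} \<le> n"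
proof -
  define P :: "'a poly" where "P = Polynomial.monom 1 n + Polynomial.monom (- c) m"
  have deg: "Polynomial.degree P = n"
    unfolding P_def using assms
    by (subst degree_add_eq_left) (auto simp: degree_monom_eq intro: le_less_trans[OF degree_monom_le])
  then have "P \<noteq> 0" using assms by auto
  moreover have "{z. poly P z = 0} = {z. z ^ n = c * z ^ m}"
    by (auto simp: P_def poly_monom eq_neg_iff_add_eq_0)
  ultimately show "finite {z. z ^ n = c * z ^ m}" "card {z. z ^ n = c * z ^ m} \<le> n"
    using poly_roots_finite[of P] card_poly_roots_bound[of P] deg by simp_all
qed

lemma
  fixes c :: "'a::idom"
  assumes "0 < n"
  shows finite_roots_power: "finite {z. z ^ n = c}"
    and card_roots_power_le: "card {z. z ^ n = c} \<le> n"
  using finite_power_eq[of 0 n c] card_power_eq_le[of 0 n c] assms by simp_all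

lemma field_power_card_minus_one:
  fixes x :: "'a::field"
  assumes "finite (UNIV :: 'a set)" and "x \<noteq> 0"
  shows "x ^ (CARD('a) - 1) = 1"
proof -
  let ?G = "\<lparr>carrier = UNIV - {0 :: 'a}, monoid.mult = (*), one = 1\<rparr>"
  have "group ?G"
  proof (rule groupI)
    show "\<exists>y\<in>carrier ?G. y \<otimes>\<^bsub>?G\<^esub> x = \<one>\<^bsub>?G\<^esub>" if "x \<in> carrier ?G" for x
      using that by (intro bexI[of _ "inverse x"]) auto
  qed (auto simp: mult.assoc)
  then have "x [^]\<^bsub>?G\<^esub> Coset.order ?G = 1"
    using group.pow_order_eq_1[of ?G x] assms(2) by simp
  moreover have "x [^]\<^bsub>?G\<^esub> n = x ^ n" for n :: nat
    by (induction n) simp_all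
  moreover have "Coset.order ?G = CARD('a) - 1"
    using assms(1) by (simp add: order_def card_Diff_singleton)
  ultimately show ?thesis by simp
qed

lemma field_power_card:
  fixes x :: "'a::field"
  assumes "finite (UNIV :: 'a set)"
  shows "x ^ CARD('a) = x"
proof -
  have "CARD('a) = Suc (CARD('a) - 1)"
    using assms finite_UNIV_card_ge_0 by fastforce
  then show ?thesis
    using field_power_card_minus_one[OF assms, of x] by (metis power_Suc mult_1_right power_0_Suc)
qed

lemma field_square_if_power_half_card:
  fixes z :: "'a::field"
  assumes odd: "odd CARD('a)" and z: "z ^ ((CARD('a) - 1) div 2) = 1"
  shows "\<exists>t. t ^ 2 = z"
proof -
  define h where "h = (CARD('a) - 1) div 2"
  have fin: "finite (UNIV :: 'a set)" using odd card.infinite by fastforce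
  have "card {0 :: 'a, 1} \<le> CARD('a)" by (rule card_mono[OF fin]) simp
  then have "CARD('a) \<ge> 3" using odd by (auto elim!: oddE)
  then have card_h: "CARD('a) - 1 = 2 * h" "h \<ge> 1" using odd unfolding h_def by (auto elim!: oddE)
  define Sq where "Sq = (\<lambda>t::'a. t ^ 2) ` (UNIV - {0})"
  define R where "R = {z::'a. z ^ h = 1}"
  have "Sq \<subseteq> R"
    using field_power_card_minus_one[OF fin] card_h
    by (auto simp: Sq_def R_def power_mult[symmetric])
  have "UNIV - {0} \<subseteq> (\<Union>s\<in>Sq. {t::'a. t ^ 2 = s})"
    by (auto simp: Sq_def)
  then have "CARD('a) - 1 \<le> card (\<Union>s\<in>Sq. {t::'a. t ^ 2 = s})"
    using card_mono[OF finite_subset[OF subset_UNIV fin]] fin by (metis card_Diff_singleton UNIV_I)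
  also have "\<dots> \<le> (\<Sum>s\<in>Sq. card {t::'a. t ^ 2 = s})"
    using fin by (intro card_UN_le) (simp add: Sq_def)
  also have "\<dots> \<le> (\<Sum>s\<in>Sq. 2)"
    by (rule sum_mono) (simp add: card_roots_power_le)
  also have "\<dots> = 2 * card Sq" by simp
  finally have "h \<le> card Sq" using card_h by linarith
  moreover have "card R \<le> h"
    unfolding R_def by (rule card_roots_power_le) (use card_h in simp)
  ultimately have "card R \<le> card Sq" by linarith
  then have "Sq = R" using \<open>Sq \<subseteq> R\<close> finite_subset[OF subset_UNIV fin] by (intro card_seteq) auto
  moreover have "z \<in> R" using z unfolding R_def h_def by simp
  ultimately show ?thesis unfolding Sq_def by auto
qed

lemma sum_lessThan_Suc_shift_cyclic:
  fixes g :: "nat \<Rightarrow> 'a::cancel_comm_monoid_add"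
  assumes "g d = g 0"
  shows "(\<Sum>i<d. g (Suc i)) = (\<Sum>i<d. g i)"
proof -
  have "g 0 + (\<Sum>i<d. g (Suc i)) = (\<Sum>i<d. g i) + g d"
    by (simp only: sum.lessThan_Suc_shift[symmetric] sum.lessThan_Suc)
  then show ?thesis using assms by (simp add: add.commute)
qed

definition quad_ext :: "complex \<Rightarrow> complex set" where
  "quad_ext g = {a + b * g | a b. a \<in> \<rat> \<and> b \<in> \<rat>}"

lemma Rats_in_quad_ext: "x \<in> \<rat> \<Longrightarrow> x \<in> quad_ext g"
  unfolding quad_ext_def by (rule CollectI, rule exI[of _ x], rule exI[of _ 0]) simp

lemma quad_ext_mult:
  assumes "g ^ 2 \<in> \<rat>" and "x \<in> quad_ext g" and "y \<in> quad_ext g"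
  shows "x * y \<in> quad_ext g"
proof -
  obtain a b c e where "a \<in> \<rat>" "b \<in> \<rat>" "c \<in> \<rat>" "e \<in> \<rat>"
    and xy: "x = a + b * g" "y = c + e * g"
    using assms(2,3) unfolding quad_ext_def by blast
  moreover have "x * y = (a * c + b * e * g ^ 2) + (a * e + b * c) * g"
    unfolding xy by (simp add: algebra_simps power2_eq_square)
  moreover have "a * c + b * e * g ^ 2 \<in> \<rat>" "a * e + b * c \<in> \<rat>"
    using calculation assms(1) by (simp_all add: Rats_add Rats_mult)
  ultimately show ?thesis
    unfolding quad_ext_def by blast
qed

lemma quad_ext_power: "g ^ 2 \<in> \<rat> \<Longrightarrow> x \<in> quad_ext g \<Longrightarrow> x ^ n \<in> quad_ext g"
  by (induction n) (simp_all add: Rats_in_quad_ext quad_ext_mult)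

lemma inverse_in_quad_ext:
  assumes "g ^ 2 \<in> \<rat>"
  shows "inverse g \<in> quad_ext g"
proof -
  have "inverse g = 0 + inverse (g ^ 2) * g"
    by (cases "g = 0") (simp_all add: power2_eq_square)
  then show ?thesis
    using assms unfolding quad_ext_def by (intro CollectI exI[of _ 0] exI[of _ "inverse (g ^ 2)"]) simp
qed

lemma quad_ext_uminus: "quad_ext (- g) = quad_ext g"
proof -
  have sub: "quad_ext (- h) \<subseteq> quad_ext h" for h
  proof
    fix z assume "z \<in> quad_ext (- h)"
    then obtain a b where "a \<in> \<rat>" "b \<in> \<rat>" "z = a + b * (- h)"
      unfolding quad_ext_def by blast
    then show "z \<in> quad_ext h" unfolding quad_ext_def by (intro CollectI exI[of _ a] exI[of _ "- b"]) simp
  qed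
  show ?thesis using sub[of g] sub[of "- g"] by (intro subset_antisym) simp_all
qed

lemma quad_subfield_eq_quad_ext:
  assumes "g ^ 2 = of_int ((-1) ^ ((p - 1) div 2) * int p)"
  shows "quad_subfield p = quad_ext g"
proof -
  define r where "r = csqrt (of_int ((-1) ^ ((p - 1) div 2) * int p))"
  have "quad_subfield p = quad_ext r"
    unfolding quad_subfield_def quad_ext_def r_def by (auto simp: Rats_def)
  moreover have "g ^ 2 = r ^ 2" unfolding assms r_def by simp
  then have "g = r \<or> g = - r" by (simp add: power2_eq_iff)
  ultimately show ?thesis using quad_ext_uminus by auto
qed

lemma sum_by_fibres:
  fixes T :: "'a \<Rightarrow> 'b" and h :: "'b \<Rightarrow> 'c::semiring_0"
  assumes "finite (UNIV :: 'a set)" and "finite A" and "\<And>x. T x \<in> A"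
  shows "(\<Sum>x\<in>UNIV. h (T x) * w x) = (\<Sum>y\<in>A. h y * (\<Sum>x\<in>{x. T x = y}. w x))"
proof -
  have "(\<Sum>x\<in>UNIV. h (T x) * w x) = (\<Sum>y\<in>A. \<Sum>x\<in>{x \<in> UNIV. T x = y}. h (T x) * w x)"
    by (rule sum.group[symmetric]) (use assms in auto)
  also have "\<dots> = (\<Sum>y\<in>A. \<Sum>x\<in>{x. T x = y}. h y * w x)"
    by (intro sum.cong refl) auto
  also have "\<dots> = (\<Sum>y\<in>A. h y * (\<Sum>x\<in>{x. T x = y}. w x))"
    by (simp add: sum_distrib_left)
  finally show ?thesis .
qed

lemma fibre_sum_scale:
  fixes T :: "'a::field \<Rightarrow> 'a"
  assumes "c \<noteq> 0" and "\<And>x. T (c * x) = c * T x" and "\<And>x. w (c * x) = w x"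
  shows "(\<Sum>x\<in>{x. T x = c * y}. w x) = (\<Sum>x\<in>{x. T x = y}. w x)"
proof (rule sum.reindex_bij_witness[of _ "\<lambda>x. c * x" "\<lambda>x. x / c"])
  fix x assume x: "x \<in> {x. T x = c * y}"
  have "c * T (x / c) = T (c * (x / c))" by (rule assms(2)[symmetric])
  also have "c * (x / c) = x" using assms(1) by simp
  also have "T x = c * y" using x by simp
  finally have "c * T (x / c) = c * y" .
  then show "x / c \<in> {x. T x = y}" using assms(1) by simp
  show "w (x / c) = w x" using assms(3)[of "x / c"] assms(1) by simp
next
  fix x assume "x \<in> {x. T x = y}"
  then show "c * x \<in> {x. T x = c * y}" using assms(2) by simp
qed (use assms(1) in simp_all)

lemma power_power_fixed:
  fixes t :: "'a::monoid_mult"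
  assumes "t ^ m = t"
  shows "t ^ (m ^ j) = t"
  by (induction j) (simp_all add: power_mult assms)

lemma twisted_power_sum_scale:
  fixes t x :: "'a::field" and a :: "nat \<Rightarrow> 'a"
  assumes "odd Q" and "t ^ Q = t"
  shows "(\<Sum>i\<le>n. a i * (t ^ 2 * x) ^ ((Q ^ i + 1) div 2))
    = t ^ 2 * (\<Sum>i\<le>n. a i * x ^ ((Q ^ i + 1) div 2))"
proof -
  have "(t ^ 2) ^ ((Q ^ i + 1) div 2) = t ^ 2" for i
  proof -
    have "2 * ((Q ^ i + 1) div 2) = Q ^ i + 1" using \<open>odd Q\<close> by simp
    then have "(t ^ 2) ^ ((Q ^ i + 1) div 2) = t ^ (Q ^ i + 1)" by (metis power_mult)
    also have "\<dots> = t ^ 2"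
      using power_power_fixed[OF \<open>t ^ Q = t\<close>, of i]
      by (simp only: Suc_eq_plus1[symmetric] power_Suc2 power2_eq_square)
    finally show ?thesis .
  qed
  then show ?thesis
    by (simp add: sum_distrib_left power_mult_distrib algebra_simps)
qed

lemma quad_char_square_mult:
  fixes t x :: "'a::field"
  assumes "t \<noteq> 0"
  shows "quad_char (t ^ 2 * x) = quad_char x"
proof -
  have "(\<exists>y. y ^ 2 = t ^ 2 * x) \<longleftrightarrow> (\<exists>y. y ^ 2 = x)"
  proof
    assume "\<exists>y. y ^ 2 = t ^ 2 * x"
    then obtain y where "y ^ 2 = t ^ 2 * x" by blast
    then have "(y / t) ^ 2 = x" using assms by (simp add: power_divide)
    then show "\<exists>y. y ^ 2 = x" by blast
  next
    assume "\<exists>y. y ^ 2 = x"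
    then obtain y where "y ^ 2 = x" by blast
    then have "(t * y) ^ 2 = t ^ 2 * x" by (simp add: power_mult_distrib)
    then show "\<exists>y. y ^ 2 = t ^ 2 * x" by blast
  qed
  then show ?thesis using assms by (simp add: quad_char_def)
qed

lemma quad_char_in_Rats: "quad_char x \<in> \<rat>"
  by (simp add: quad_char_def)

lemma additive_on_vanishes:
  fixes \<psi> :: "'a::monoid_add \<Rightarrow> 'b::idom"
  assumes add: "\<forall>x\<in>A. \<forall>y\<in>A. \<psi> (x + y) = \<psi> x * \<psi> y"
    and "0 \<in> A" and "\<psi> 0 \<noteq> 1" and "y \<in> A"
  shows "\<psi> y = 0"
proof -
  have "\<psi> 0 = \<psi> (0 + 0)" by simp
  also have "\<dots> = \<psi> 0 * \<psi> 0" using add \<open>0 \<in> A\<close> by blast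
  finally have "\<psi> 0 * (1 - \<psi> 0) = 0" by (simp add: algebra_simps)
  then have "\<psi> 0 = 0" using \<open>\<psi> 0 \<noteq> 1\<close> by simp
  have "\<psi> y = \<psi> (y + 0)" by simp
  also have "\<dots> = \<psi> y * \<psi> 0" using add \<open>0 \<in> A\<close> \<open>y \<in> A\<close> by blast
  finally show ?thesis using \<open>\<psi> 0 = 0\<close> by simp
qed

locale prime_char_field =
  fixes p :: nat and field_type :: "'a::field itself"
  assumes prime_p: "prime p" and CHAR_eq: "CHAR('a) = p"
begin

abbreviation Fp :: "'a set" where "Fp \<equiv> range of_nat"

lemma of_nat_power_p: "(of_nat m :: 'a) ^ p = of_nat m"
proof (induction m)
  case 0
  show ?case using prime_p prime_gt_0_nat by simp
next
  case (Suc m)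
  have "(of_nat m + 1 :: 'a) ^ p = of_nat m ^ p + 1 ^ p"
    by (rule freshmans_dream) (use prime_p CHAR_eq in auto)
  then show ?case using Suc by (simp add: add.commute)
qed

lemma inj_on_of_nat_lessThan_p: "inj_on (of_nat :: nat \<Rightarrow> 'a) {..<p}"
  by (rule inj_onI) (simp add: of_nat_eq_iff_cong_CHAR CHAR_eq cong_def)

lemma Fp_eq_image: "Fp = of_nat ` {..<p}"
proof (intro equalityI subsetI)
  fix z assume "z \<in> Fp"
  then obtain m where "z = of_nat m" by blast
  then have "z = of_nat (m mod p)"
    by (simp add: of_nat_eq_iff_cong_CHAR CHAR_eq cong_def)
  moreover have "m mod p < p" using prime_gt_0_nat[OF prime_p] by simp
  ultimately show "z \<in> of_nat ` {..<p}" by blast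
qed auto

lemma finite_Fp: "finite Fp"
  by (simp add: Fp_eq_image)

lemma card_Fp: "card Fp = p"
  by (simp add: Fp_eq_image card_image[OF inj_on_of_nat_lessThan_p])

lemma Fp_iff: "z \<in> Fp \<longleftrightarrow> z ^ p = z"
proof -
  have sub: "Fp \<subseteq> {z. z ^ p = z}" using of_nat_power_p by auto
  have "card {z::'a. z ^ p = z} \<le> card Fp" "finite {z::'a. z ^ p = z}"
    using card_power_eq_le[of 1 p 1] finite_power_eq[of 1 p 1] prime_gt_1_nat[OF prime_p]
    by (simp_all add: card_Fp)
  then have "Fp = {z. z ^ p = z}" by (intro card_seteq[OF _ sub]) simp_all
  then show ?thesis by blast
qed

lemma Fp_add:
  assumes "x \<in> Fp" and "y \<in> Fp"
  shows "x + y \<in> Fp"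
proof -
  have "(x + y) ^ p = x ^ p + y ^ p"
    by (rule freshmans_dream) (use prime_p CHAR_eq in auto)
  then show ?thesis using assms by (simp add: Fp_iff)
qed

lemma Fp_mult: "x \<in> Fp \<Longrightarrow> y \<in> Fp \<Longrightarrow> x * y \<in> Fp"
  by (simp add: Fp_iff power_mult_distrib)

lemma Fp_uminus:
  assumes "x \<in> Fp"
  shows "- x \<in> Fp"
proof -
  have "(- x) ^ p = - (x ^ p)"
    by (rule minus_power_prime_CHAR) (use prime_p CHAR_eq in auto)
  then show ?thesis using assms by (simp add: Fp_iff)
qed

lemma Fp_diff: "x \<in> Fp \<Longrightarrow> y \<in> Fp \<Longrightarrow> x - y \<in> Fp"
  using Fp_add[OF _ Fp_uminus] by simp

lemma Fp_divide: "x \<in> Fp \<Longrightarrow> y \<in> Fp \<Longrightarrow> x / y \<in> Fp"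
  by (simp add: Fp_iff power_divide)

lemma zero_in_Fp: "0 \<in> Fp" and one_in_Fp: "1 \<in> Fp"
  using range_eqI[of 0 of_nat 0] range_eqI[of 1 of_nat 1] by simp_all

lemma of_int_in_Fp: "(of_int z :: 'a) \<in> Fp"
  by (cases z rule: int_cases2) (auto intro: Fp_uminus)

lemma Fp_power_p_power: "c \<in> Fp \<Longrightarrow> c ^ (p ^ j) = c"
  by (simp add: Fp_iff power_power_fixed)

lemma Fp_fermat:
  assumes "c \<in> Fp" and "c \<noteq> 0"
  shows "c ^ (p - 1) = 1"
proof -
  have "c * c ^ (p - 1) = c ^ Suc (p - 1)" by simp
  also have "Suc (p - 1) = p" using prime_gt_0_nat[OF prime_p] by simp
  finally show ?thesis using assms by (simp add: Fp_iff)
qed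

lemma card_Fp_nonzero: "card (Fp - {0}) = p - 1"
  by (simp add: card_Diff_singleton zero_in_Fp card_Fp)

lemma sum_Fp_nonzero_mult:
  assumes "g \<in> Fp - {0}"
  shows "(\<Sum>y\<in>Fp - {0}. h (g * y)) = (\<Sum>y\<in>Fp - {0}. h y)"
  by (rule sum.reindex_bij_witness[of _ "\<lambda>y. y / g" "\<lambda>y. g * y"])
     (use assms Fp_mult Fp_divide in auto)

lemma abs_trace_in_Fp:
  assumes "CARD('a) = p ^ d"
  shows "abs_trace p d y \<in> Fp"
proof -
  have "finite (UNIV :: 'a set)"
    using assms prime_gt_0_nat[OF prime_p] by (intro card_ge_0_finite) simp
  then have "y ^ (p ^ d) = y" using field_power_card assms by metis
  then have shift: "(\<Sum>i<d. y ^ (p ^ Suc i)) = (\<Sum>i<d. y ^ (p ^ i))"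
    by (intro sum_lessThan_Suc_shift_cyclic[where g = "\<lambda>i. y ^ (p ^ i)"]) simp
  have "(abs_trace p d y) ^ p = (\<Sum>i<d. (y ^ (p ^ i)) ^ p)"
    unfolding abs_trace_def by (rule freshmans_dream_sum) (use prime_p CHAR_eq in auto)
  also have "\<dots> = (\<Sum>i<d. y ^ (p ^ i))"
    using shift by (simp add: power_mult[symmetric] mult.commute)
  finally show ?thesis unfolding Fp_iff abs_trace_def .
qed

lemma abs_trace_scale:
  assumes "c \<in> Fp"
  shows "abs_trace p d (c * y) = c * abs_trace p d y"
  unfolding abs_trace_def sum_distrib_left
  by (intro sum.cong refl) (simp only: power_mult_distrib Fp_power_p_power[OF assms])

end

locale odd_char_field = prime_char_field +
  assumes odd_p: "odd p"
begin

lemma p_gt_2: "p > 2"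
proof -
  have "p \<noteq> 2" using odd_p by auto
  then show ?thesis using prime_ge_2_nat[OF prime_p] by linarith
qed

(* Euler's criterion; only the values on Fp are meaningful. *)
definition chi :: "'a \<Rightarrow> int" where
  "chi y = (if y = 0 then 0 else if y ^ ((p - 1) div 2) = 1 then 1 else -1)"

lemma chi_nonzero: "y \<noteq> 0 \<Longrightarrow> chi y = 1 \<or> chi y = -1"
  by (auto simp: chi_def)

lemma of_int_eq_iff_sign:
  assumes "a \<in> {-1, 0, 1}" and "b \<in> {-1, 0, 1}"
  shows "(of_int a :: 'a) = of_int b \<longleftrightarrow> a = b"
proof
  assume "(of_int a :: 'a) = of_int b"
  then have "int p dvd a - b"
    by (simp add: of_int_eq_iff_cong_CHAR CHAR_eq cong_iff_dvd_diff)
  moreover have "\<bar>a - b\<bar> < int p" using assms p_gt_2 by auto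
  ultimately show "a = b" using dvd_imp_le_int[of "a - b" "int p"] by fastforce
qed simp

lemma of_int_chi:
  assumes "y \<in> Fp"
  shows "of_int (chi y) = y ^ ((p - 1) div 2)"
proof (cases "y = 0")
  case False
  have "(y ^ ((p - 1) div 2)) ^ 2 = y ^ (p - 1)"
    using odd_p by (simp add: power_mult[symmetric])
  then have "(y ^ ((p - 1) div 2)) ^ 2 = 1" using Fp_fermat assms False by simp
  then show ?thesis using False by (auto simp: chi_def power2_eq_1_iff)
qed (use p_gt_2 in \<open>simp add: chi_def\<close>)

lemma chi_of_nat: "chi (of_nat m) = Legendre (int m) (int p)"
proof -
  have "[Legendre (int m) (int p) = int m ^ ((p - 1) div 2)] (mod int p)"
    by (rule euler_criterion) (use prime_p p_gt_2 in auto)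
  then have "(of_int (Legendre (int m) (int p)) :: 'a) = of_int (int m ^ ((p - 1) div 2))"
    by (simp only: of_int_eq_iff_cong_CHAR CHAR_eq)
  then have "(of_int (chi (of_nat m)) :: 'a) = of_int (Legendre (int m) (int p))"
    by (simp add: of_int_chi)
  then show ?thesis
    by (subst (asm) of_int_eq_iff_sign) (auto simp: chi_def Legendre_def)
qed

lemma chi_mult:
  assumes "x \<in> Fp" and "y \<in> Fp"
  shows "chi (x * y) = chi x * chi y"
proof -
  have "(of_int (chi (x * y)) :: 'a) = of_int (chi x * chi y)"
    using assms Fp_mult by (simp add: of_int_chi power_mult_distrib)
  then show ?thesis
    by (subst (asm) of_int_eq_iff_sign) (auto simp: chi_def)
qed

lemma chi_square: "y \<in> Fp - {0} \<Longrightarrow> chi y * chi y = 1"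
  using chi_nonzero by fastforce

lemma chi_minus_one: "chi (-1) = (-1) ^ ((p - 1) div 2)"
proof -
  have "(of_int (chi (-1)) :: 'a) = of_int ((-1) ^ ((p - 1) div 2))"
    using of_int_chi[OF Fp_uminus[OF one_in_Fp]] by simp
  moreover have "((-1) ^ ((p - 1) div 2) :: int) \<in> {-1, 0, 1}"
    by (cases "even ((p - 1) div 2)") auto
  ultimately show ?thesis
    by (subst (asm) of_int_eq_iff_sign) (auto simp: chi_def)
qed

lemma chi_square_root:
  assumes "y \<in> Fp" and "chi y = 1"
  shows "\<exists>t\<in>Fp - {0}. t ^ 2 = y"
proof -
  obtain m where y: "y = of_nat m" using assms(1) by blast
  then have "QuadRes (int p) (int m)"
    using assms(2) chi_of_nat by (auto simp: Legendre_def split: if_splits)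
  then obtain z where "[z ^ 2 = int m] (mod int p)" unfolding QuadRes_def by blast
  then have "(of_int (z ^ 2) :: 'a) = of_int (int m)"
    by (simp only: of_int_eq_iff_cong_CHAR CHAR_eq)
  then have "(of_int z :: 'a) ^ 2 = y" by (simp add: y)
  moreover have "y \<noteq> 0" using assms(2) by (auto simp: chi_def)
  ultimately show ?thesis using of_int_in_Fp by force
qed

lemma exists_nonresidue: "\<exists>g\<in>Fp. chi g = -1"
proof (rule ccontr)
  assume no_nonresidue: "\<not> ?thesis"
  define e where "e = (p - 1) div 2"
  have "e > 0" using p_gt_2 unfolding e_def by simp
  have "Fp - {0} \<subseteq> {z. z ^ e = 1}"
  proof
    fix y assume y: "y \<in> Fp - {0}"
    then have "chi y = 1" using no_nonresidue chi_nonzero by blast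
    then show "y \<in> {z. z ^ e = 1}" using of_int_chi y unfolding e_def by force
  qed
  then have "card (Fp - {0}) \<le> card {z::'a. z ^ e = 1}"
    by (rule card_mono[OF finite_roots_power[OF \<open>e > 0\<close>]])
  also have "\<dots> \<le> e"
    using \<open>e > 0\<close> by (rule card_roots_power_le)
  finally show False using card_Fp_nonzero p_gt_2 unfolding e_def by linarith
qed

lemma sum_chi: "(\<Sum>y\<in>Fp - {0}. chi y) = 0"
proof -
  obtain g where g: "g \<in> Fp" "chi g = -1" using exists_nonresidue by blast
  then have "g \<in> Fp - {0}" by (auto simp: chi_def)
  then have "(\<Sum>y\<in>Fp - {0}. chi y) = (\<Sum>y\<in>Fp - {0}. chi (g * y))"
    by (rule sum_Fp_nonzero_mult[symmetric])
  also have "\<dots> = - (\<Sum>y\<in>Fp - {0}. chi y)"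
    using g chi_mult by (simp add: sum_negf)
  finally show ?thesis by simp
qed

lemma square_root_in_field:
  assumes card: "CARD('a) = p ^ d" and "even d" and c: "c \<in> Fp"
  shows "\<exists>t. t ^ 2 = c \<and> t ^ (p ^ 2) = t"
proof (cases "c = 0")
  case False
  have p2: "p ^ 2 - 1 = (p - 1) * (2 * ((p + 1) div 2))"
    using odd_p by (simp add: power2_eq_square algebra_simps)
  have "[p ^ 2 = 1] (mod 2 * (p - 1))"
    using p2 p_gt_2 by (subst cong_altdef_nat) (auto simp: one_le_power)
  then have "[(p ^ 2) ^ (d div 2) = 1] (mod 2 * (p - 1))"
    using cong_pow by fastforce
  then have "2 * (p - 1) dvd p ^ d - 1"
    using \<open>even d\<close> p_gt_2 by (subst (asm) cong_altdef_nat) (auto simp: power_mult[symmetric] one_le_power)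
  then obtain r where r: "(p ^ d - 1) div 2 = (p - 1) * r" by fastforce
  have "c ^ ((CARD('a) - 1) div 2) = 1"
    using Fp_fermat[OF c False] unfolding card r by (simp add: power_mult)
  moreover have "odd CARD('a)" using card odd_p by simp
  ultimately obtain t where t: "t ^ 2 = c" using field_square_if_power_half_card by blast
  have "t * t ^ (p ^ 2 - 1) = t ^ Suc (p ^ 2 - 1)" by simp
  also have "Suc (p ^ 2 - 1) = p ^ 2" using p_gt_2 by simp
  also have "t ^ (p ^ 2 - 1) = (c ^ (p - 1)) ^ ((p + 1) div 2)"
    unfolding p2 by (simp add: t[symmetric] power_mult[symmetric] mult_ac)
  finally show ?thesis using t Fp_fermat[OF c False] by auto
qed (use p_gt_2 in \<open>auto intro: exI[of _ 0]\<close>)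

lemma abs_trace_twisted_power_sum_scale:
  assumes "t ^ 2 \<in> Fp" and "t ^ (p ^ k) = t"
  shows "abs_trace p d (\<Sum>i\<le>n. a i * (t ^ 2 * x) ^ (((p ^ k) ^ i + 1) div 2))
    = t ^ 2 * abs_trace p d (\<Sum>i\<le>n. a i * x ^ (((p ^ k) ^ i + 1) div 2))"
  using twisted_power_sum_scale[of "p ^ k" t] abs_trace_scale[OF assms(1)] assms(2) odd_p by simp

end

locale additive_character = odd_char_field p field_type
    for p and field_type :: "'a::field itself" +
  fixes \<psi> :: "'a \<Rightarrow> complex"
  assumes psi_add: "x \<in> Fp \<Longrightarrow> y \<in> Fp \<Longrightarrow> \<psi> (x + y) = \<psi> x * \<psi> y"
    and psi_nontrivial: "\<exists>x\<in>Fp. \<psi> x \<noteq> 1"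
    and psi_zero: "\<psi> 0 = 1"
begin

lemma sum_psi: "(\<Sum>y\<in>Fp. \<psi> y) = 0"
proof -
  obtain y0 where y0: "y0 \<in> Fp" "\<psi> y0 \<noteq> 1" using psi_nontrivial by blast
  have "(\<Sum>y\<in>Fp. \<psi> y) = (\<Sum>y\<in>Fp. \<psi> (y0 + y))"
    by (rule sum.reindex_bij_witness[of _ "\<lambda>y. y0 + y" "\<lambda>y. y - y0"])
       (use y0 Fp_add Fp_diff in auto)
  also have "\<dots> = \<psi> y0 * (\<Sum>y\<in>Fp. \<psi> y)"
    using y0 psi_add by (simp add: sum_distrib_left)
  finally have "(1 - \<psi> y0) * (\<Sum>y\<in>Fp. \<psi> y) = 0" by (simp add: algebra_simps)
  then show ?thesis using y0 by simp
qed

lemma sum_psi_nonzero: "(\<Sum>y\<in>Fp - {0}. \<psi> y) = -1"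
proof -
  have "\<psi> 0 + (\<Sum>y\<in>Fp - {0}. \<psi> y) = (\<Sum>y\<in>Fp. \<psi> y)"
    by (rule sum.remove[symmetric]) (simp_all add: finite_Fp zero_in_Fp)
  then show ?thesis by (simp add: sum_psi psi_zero add_eq_0_iff)
qed

lemma sum_psi_mult:
  assumes "c \<in> Fp"
  shows "(\<Sum>y\<in>Fp - {0}. \<psi> (c * y)) = (if c = 0 then of_nat (p - 1) else -1)"
  using assms sum_Fp_nonzero_mult[of c \<psi>] sum_psi_nonzero by (simp add: psi_zero card_Fp_nonzero)

lemma gauss_Fp_eq: "gauss_Fp p \<psi> = (\<Sum>y\<in>Fp - {0}. \<psi> y * of_int (chi y))"
proof -
  have inj: "inj_on (of_nat :: nat \<Rightarrow> 'a) {1..<p}"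
    by (rule inj_on_subset[OF inj_on_of_nat_lessThan_p]) auto
  have "(of_nat ` {1..<p} :: 'a set) = of_nat ` ({..<p} - {0})"
    by (rule arg_cong[where f = "image of_nat"]) auto
  also have "\<dots> = of_nat ` {..<p} - of_nat ` {0} "
    by (rule inj_on_image_set_diff[OF inj_on_of_nat_lessThan_p]) (use p_gt_2 in auto)
  finally have image: "of_nat ` {1..<p} = Fp - {0}"
    by (simp add: Fp_eq_image)
  show ?thesis
    unfolding gauss_Fp_def image[symmetric] sum.reindex[OF inj]
    by (simp add: chi_of_nat)
qed

lemma gauss_Fp_reflect:
  "(\<Sum>y\<in>Fp - {0}. \<psi> (- y) * of_int (chi y)) = of_int (chi (-1)) * gauss_Fp p \<psi>"
proof -
  have "(\<Sum>y\<in>Fp - {0}. \<psi> (- y) * of_int (chi y)) = (\<Sum>y\<in>Fp - {0}. \<psi> y * of_int (chi (- y)))"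
    by (rule sum.reindex_bij_witness[of _ uminus uminus]) (use Fp_uminus in auto)
  also have "\<dots> = (\<Sum>y\<in>Fp - {0}. of_int (chi (-1)) * (\<psi> y * of_int (chi y)))"
    using chi_mult[OF Fp_uminus[OF one_in_Fp]] by (intro sum.cong) simp_all
  finally show ?thesis by (simp add: gauss_Fp_eq sum_distrib_left)
qed

lemma gauss_Fp_product_term:
  assumes a: "a \<in> Fp - {0}"
  shows "(\<Sum>b\<in>Fp - {0}. \<psi> a * of_int (chi a) * (\<psi> (- b) * of_int (chi b)))
    = (\<Sum>t\<in>Fp - {0}. \<psi> ((1 - t) * a) * of_int (chi t))"
proof -
  have "(\<Sum>b\<in>Fp - {0}. \<psi> a * of_int (chi a) * (\<psi> (- b) * of_int (chi b)))
      = (\<Sum>t\<in>Fp - {0}. \<psi> a * of_int (chi a) * (\<psi> (- (a * t)) * of_int (chi (a * t))))"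
    by (rule sum_Fp_nonzero_mult[OF a, symmetric])
  also have "\<dots> = (\<Sum>t\<in>Fp - {0}. \<psi> ((1 - t) * a) * of_int (chi t))"
  proof (intro sum.cong refl)
    fix t assume t: "t \<in> Fp - {0}"
    have "\<psi> a * \<psi> (- (a * t)) = \<psi> ((1 - t) * a)"
      using psi_add[of a "- (a * t)"] a t Fp_mult Fp_uminus by (simp add: algebra_simps)
    moreover have "chi a * chi (a * t) = chi t"
      using chi_mult[of a t] chi_square[OF a] a t by (simp add: mult.assoc[symmetric])
    ultimately show "\<psi> a * of_int (chi a) * (\<psi> (- (a * t)) * of_int (chi (a * t)))
        = \<psi> ((1 - t) * a) * of_int (chi t)"
      by (metis (no_types, lifting) mult.assoc mult.left_commute of_int_mult)
  qed
  finally show ?thesis .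
qed

lemma gauss_Fp_times_reflect:
  "gauss_Fp p \<psi> * (\<Sum>y\<in>Fp - {0}. \<psi> (- y) * of_int (chi y)) = of_nat p"
proof -
  have "gauss_Fp p \<psi> * (\<Sum>y\<in>Fp - {0}. \<psi> (- y) * of_int (chi y))
      = (\<Sum>a\<in>Fp - {0}. \<Sum>b\<in>Fp - {0}. \<psi> a * of_int (chi a) * (\<psi> (- b) * of_int (chi b)))"
    unfolding gauss_Fp_eq by (rule sum_product)
  also have "\<dots> = (\<Sum>a\<in>Fp - {0}. \<Sum>t\<in>Fp - {0}. \<psi> ((1 - t) * a) * of_int (chi t))"
    by (intro sum.cong refl gauss_Fp_product_term)
  also have "\<dots> = (\<Sum>t\<in>Fp - {0}. \<Sum>a\<in>Fp - {0}. \<psi> ((1 - t) * a) * of_int (chi t))"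
    by (rule sum.swap)
  also have "\<dots> = (\<Sum>t\<in>Fp - {0}. (if t = 1 then of_nat p else 0) - of_int (chi t))"
  proof (intro sum.cong refl)
    fix t assume t: "t \<in> Fp - {0}"
    then have "(\<Sum>a\<in>Fp - {0}. \<psi> ((1 - t) * a)) = (if t = 1 then of_nat (p - 1) else -1)"
      using sum_psi_mult[OF Fp_diff[OF one_in_Fp, of t]] by simp
    moreover have "of_nat (p - 1) = (of_nat p - 1 :: complex)" using p_gt_2 by (simp add: of_nat_diff)
    ultimately show "(\<Sum>a\<in>Fp - {0}. \<psi> ((1 - t) * a) * of_int (chi t))
        = (if t = 1 then of_nat p else 0) - of_int (chi t)"
      by (auto simp: sum_distrib_right[symmetric] chi_def algebra_simps)
  qed
  also have "\<dots> = of_nat p"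
    using sum_chi one_in_Fp finite_Fp by (simp add: sum_subtractf sum.delta flip: of_int_sum)
  finally show ?thesis .
qed

lemma gauss_Fp_square: "(gauss_Fp p \<psi>) ^ 2 = of_int ((-1) ^ ((p - 1) div 2) * int p)"
proof -
  have "of_int (chi (-1)) * (gauss_Fp p \<psi>) ^ 2 = of_nat p"
    using gauss_Fp_times_reflect by (simp add: gauss_Fp_reflect power2_eq_square algebra_simps)
  moreover have "(of_int (chi (-1)) :: complex) * of_int (chi (-1)) = 1"
    using chi_square[of "-1"] Fp_uminus[OF one_in_Fp] by (simp flip: of_int_mult)
  ultimately have "(gauss_Fp p \<psi>) ^ 2 = of_int (chi (-1)) * of_nat p"
    by (metis mult.assoc mult_1)
  then show ?thesis by (simp add: chi_minus_one)
qed

lemma sum_psi_square_invariant: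
  assumes inv: "\<And>y t. y \<in> Fp - {0} \<Longrightarrow> t \<in> Fp - {0} \<Longrightarrow> N (t ^ 2 * y) = N y"
    and rat: "\<And>y. N y \<in> \<rat>"
  shows "(\<Sum>y\<in>Fp. \<psi> y * N y) \<in> quad_ext (gauss_Fp p \<psi>)"
proof -
  obtain g where "g \<in> Fp" and "chi g = -1" using exists_nonresidue by blast
  then have g: "g \<in> Fp - {0}" "chi g = -1" by (auto simp: chi_def)
  define A where "A = (N 1 + N g) / 2"
  define B where "B = (N 1 - N g) / 2"
  have N_eq: "N y = A + B * of_int (chi y)" if y: "y \<in> Fp - {0}" for y
  proof (cases "chi y = 1")
    case True
    then obtain t where "t \<in> Fp - {0}" "t ^ 2 = y" using chi_square_root y by blast
    then have "N y = N 1" using inv[of 1 t] one_in_Fp by simp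
    then show ?thesis using True by (simp add: A_def B_def field_simps)
  next
    case False
    then have "chi y = -1" using chi_nonzero y by blast
    have yg: "y / g \<in> Fp" using g y Fp_divide by blast
    have "chi y = chi (y / g) * chi g"
      using chi_mult[OF yg, of g] g by simp
    with \<open>chi y = -1\<close> g have "chi (y / g) = 1" by simp
    then obtain t where "t \<in> Fp - {0}" "t ^ 2 = y / g"
      using chi_square_root[OF yg] by blast
    then have "N y = N g" using inv[of g t] g by simp
    then show ?thesis using \<open>chi y = -1\<close> by (simp add: A_def B_def field_simps)
  qed
  have "(\<Sum>y\<in>Fp. \<psi> y * N y) = \<psi> 0 * N 0 + (\<Sum>y\<in>Fp - {0}. \<psi> y * N y)"
    by (rule sum.remove) (simp_all add: finite_Fp zero_in_Fp)
  also have "(\<Sum>y\<in>Fp - {0}. \<psi> y * N y) = (\<Sum>y\<in>Fp - {0}. A * \<psi> y + B * (\<psi> y * of_int (chi y)))"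
    using N_eq by (intro sum.cong) (simp_all add: algebra_simps)
  also have "\<dots> = - A + B * gauss_Fp p \<psi>"
    by (simp add: sum.distrib gauss_Fp_eq sum_psi_nonzero flip: sum_distrib_left)
  finally have "(\<Sum>y\<in>Fp. \<psi> y * N y) = (N 0 - A) + B * gauss_Fp p \<psi>"
    by (simp add: psi_zero)
  moreover have "N 0 - A \<in> \<rat>" "B \<in> \<rat>" using rat by (simp_all add: A_def B_def)
  ultimately show ?thesis unfolding quad_ext_def by blast
qed

lemma sum_psi_constant:
  assumes const: "\<And>y. y \<in> Fp - {0} \<Longrightarrow> N y = N 1" and rat: "\<And>y. N y \<in> \<rat>"
  shows "(\<Sum>y\<in>Fp. \<psi> y * N y) \<in> \<rat>"
proof -
  have "(\<Sum>y\<in>Fp. \<psi> y * N y) = \<psi> 0 * N 0 + (\<Sum>y\<in>Fp - {0}. \<psi> y * N y)"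
    by (rule sum.remove) (simp_all add: finite_Fp zero_in_Fp)
  also have "(\<Sum>y\<in>Fp - {0}. \<psi> y * N y) = N 1 * (\<Sum>y\<in>Fp - {0}. \<psi> y)"
    using const by (simp add: sum_distrib_left mult.commute)
  finally show ?thesis using rat by (simp add: psi_zero sum_psi_nonzero)
qed

lemma character_sum_in_quad_ext:
  assumes fin: "finite (UNIV :: 'a set)" and T: "\<And>x. T x \<in> Fp" and w: "\<And>x. w x \<in> \<rat>"
    and scale: "\<And>t x. t \<in> Fp - {0} \<Longrightarrow> T (t ^ 2 * x) = t ^ 2 * T x \<and> w (t ^ 2 * x) = w x"
  shows "(\<Sum>x\<in>UNIV. \<psi> (T x) * w x) \<in> quad_ext (gauss_Fp p \<psi>)"
  unfolding sum_by_fibres[OF fin finite_Fp T, where h = \<psi> and w = w]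
proof (rule sum_psi_square_invariant)
  fix y t assume "t \<in> Fp - {0}"
  then show "(\<Sum>x\<in>{x. T x = t ^ 2 * y}. w x) = (\<Sum>x\<in>{x. T x = y}. w x)"
    using scale by (intro fibre_sum_scale) auto
qed (use w in \<open>simp add: Rats_sum\<close>)

lemma character_sum_in_Rats:
  assumes fin: "finite (UNIV :: 'a set)" and T: "\<And>x. T x \<in> Fp" and w: "\<And>x. w x \<in> \<rat>"
    and scale: "\<And>c x. c \<in> Fp - {0} \<Longrightarrow> T (c * x) = c * T x \<and> w (c * x) = w x"
  shows "(\<Sum>x\<in>UNIV. \<psi> (T x) * w x) \<in> \<rat>"
  unfolding sum_by_fibres[OF fin finite_Fp T, where h = \<psi> and w = w]
proof (rule sum_psi_constant)
  fix y assume "y \<in> Fp - {0}"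
  then show "(\<Sum>x\<in>{x. T x = y}. w x) = (\<Sum>x\<in>{x. T x = 1}. w x)"
    using scale fibre_sum_scale[of y T w 1] by simp
qed (use w in \<open>simp add: Rats_sum\<close>)

lemma normalized_sum_in_quad_subfield:
  assumes "s \<in> quad_ext (gauss_Fp p \<psi>)"
  shows "-1 / gauss_Fp p \<psi> ^ d * s \<in> quad_subfield p"
proof -
  have G2: "(gauss_Fp p \<psi>) ^ 2 \<in> \<rat>" by (simp add: gauss_Fp_square)
  have "-1 / gauss_Fp p \<psi> ^ d * s = - 1 * inverse (gauss_Fp p \<psi>) ^ d * s"
    by (simp add: divide_inverse power_inverse)
  also have "\<dots> \<in> quad_ext (gauss_Fp p \<psi>)"
    using quad_ext_power[OF G2 inverse_in_quad_ext[OF G2]] Rats_in_quad_ext[of "-1"]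
    by (intro quad_ext_mult[OF G2] assms) auto
  finally show ?thesis by (simp add: quad_subfield_eq_quad_ext[OF gauss_Fp_square])
qed

lemma normalized_sum_in_Rats:
  assumes "even d" and "s \<in> \<rat>"
  shows "-1 / gauss_Fp p \<psi> ^ d * s \<in> \<rat>"
proof -
  have "gauss_Fp p \<psi> ^ d = ((gauss_Fp p \<psi>) ^ 2) ^ (d div 2)"
    using \<open>even d\<close> by (simp add: power_mult[symmetric])
  then show ?thesis using \<open>s \<in> \<rat>\<close> by (simp add: gauss_Fp_square)
qed

lemma normalized_homogeneous_character_sum:
  assumes card: "CARD('a) = p ^ d" and T: "\<And>x. T x \<in> Fp"
    and T_scale: "\<And>t x. t ^ 2 \<in> Fp \<Longrightarrow> t ^ (p ^ k) = t \<Longrightarrow> T (t ^ 2 * x) = t ^ 2 * T x"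
    and w: "\<And>x. w x \<in> \<rat>" and w_scale: "\<And>t x. t \<noteq> 0 \<Longrightarrow> w (t ^ 2 * x) = w x"
  shows "-1 / gauss_Fp p \<psi> ^ d * (\<Sum>x\<in>UNIV. \<psi> (T x) * w x) \<in> quad_subfield p
    \<and> (even k \<and> k dvd d \<longrightarrow> -1 / gauss_Fp p \<psi> ^ d * (\<Sum>x\<in>UNIV. \<psi> (T x) * w x) \<in> \<rat>)"
proof (intro conjI impI)
  have fin: "finite (UNIV :: 'a set)"
    using card prime_gt_0_nat[OF prime_p] by (intro card_ge_0_finite) simp
  show "-1 / gauss_Fp p \<psi> ^ d * (\<Sum>x\<in>UNIV. \<psi> (T x) * w x) \<in> quad_subfield p"
  proof (rule normalized_sum_in_quad_subfield, rule character_sum_in_quad_ext[OF fin T w])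
    fix t x assume t: "t \<in> Fp - {0}"
    then have "t ^ (p ^ k) = t" "t ^ 2 \<in> Fp"
      using Fp_power_p_power Fp_mult by (auto simp: power2_eq_square)
    then show "T (t ^ 2 * x) = t ^ 2 * T x \<and> w (t ^ 2 * x) = w x"
      using T_scale w_scale t by simp
  qed
  assume "even k \<and> k dvd d"
  then obtain k' where k: "k = 2 * k'" and "even d" by (meson dvd_trans evenE)
  show "-1 / gauss_Fp p \<psi> ^ d * (\<Sum>x\<in>UNIV. \<psi> (T x) * w x) \<in> \<rat>"
  proof (rule normalized_sum_in_Rats[OF \<open>even d\<close>], rule character_sum_in_Rats[OF fin T w])
    fix c x assume c: "c \<in> Fp - {0}"
    then obtain t where t: "t ^ 2 = c" "t ^ (p ^ 2) = t"
      using square_root_in_field[OF card \<open>even d\<close>] by blast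
    have "t ^ (p ^ k) = t"
      using power_power_fixed[OF t(2), of k'] by (simp add: k power_mult)
    moreover have "t \<noteq> 0" "t ^ 2 \<in> Fp" using c t(1) by auto
    ultimately show "T (c * x) = c * T x \<and> w (c * x) = w x"
      using T_scale[of t x] w_scale[of t x] unfolding t(1) by simp
  qed
qed

end

theorem mainTheorem12:
  fixes p k d n :: nat
    and \<psi> :: "'a::{finite,field} \<Rightarrow> complex"
    and a :: "nat \<Rightarrow> 'a" and f :: "'a \<Rightarrow> 'a"
  assumes "prime p" and "odd p"
    and "CHAR('a) = p"
    and "CARD('a) = p ^ d"
    and "k \<ge> 1"
    and psi_add: "\<forall>x\<in>range of_nat. \<forall>y\<in>range of_nat. \<psi> (x + y) = \<psi> x * \<psi> y"
    and psi_nontriv: "\<exists>x\<in>range of_nat. \<psi> x \<noteq> 1"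
    and f_def: "\<And>x. f x = (\<Sum>i\<le>n. a i * x ^ (((p ^ k) ^ i + 1) div 2))"
  defines "S_plus \<equiv> - 1 / (gauss_Fp p \<psi>) ^ d * (\<Sum>x\<in>UNIV. \<psi> (abs_trace p d (f x)))"
    and "S_minus \<equiv> - 1 / (gauss_Fp p \<psi>) ^ d * (\<Sum>x\<in>UNIV. \<psi> (abs_trace p d (f x)) * quad_char x)"
  shows "S_plus \<in> quad_subfield p \<and> S_minus \<in> quad_subfield p
     \<and> (even k \<and> k dvd d \<longrightarrow> S_plus \<in> \<rat> \<and> S_minus \<in> \<rat>)"
proof -
  interpret odd_char_field p "TYPE('a)" using assms(1-3) by unfold_locales
  define T where "T x = abs_trace p d (f x)" for x
  have T_Fp: "T x \<in> Fp" for x unfolding T_def using assms(4) by (rule abs_trace_in_Fp)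
  have T_scale: "T (t ^ 2 * x) = t ^ 2 * T x" if "t ^ 2 \<in> Fp" "t ^ (p ^ k) = t" for t x
    using abs_trace_twisted_power_sum_scale[OF that] by (simp add: T_def f_def)
  have sums: "S_plus = -1 / gauss_Fp p \<psi> ^ d * (\<Sum>x\<in>UNIV. \<psi> (T x) * 1)"
    "S_minus = -1 / gauss_Fp p \<psi> ^ d * (\<Sum>x\<in>UNIV. \<psi> (T x) * quad_char x)"
    by (simp_all add: S_plus_def S_minus_def T_def)
  show ?thesis
  proof (cases "\<psi> 0 = 1")
    case False
    \<comment> \<open>The hypotheses on \<open>\<psi>\<close> also allow \<open>\<psi> = 0\<close> on Fp; then both sums vanish.\<close>
    have "\<psi> (T x) = 0" for x
      using additive_on_vanishes[OF psi_add zero_in_Fp False T_Fp[of x]] .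
    moreover have "0 \<in> quad_subfield p"
      unfolding quad_subfield_def by (intro CollectI exI[of _ 0]) simp
    ultimately show ?thesis by (simp add: sums)
  next
    case True
    interpret additive_character p "TYPE('a)" \<psi>
      using psi_add psi_nontriv True by unfold_locales blast+
    have "-1 / gauss_Fp p \<psi> ^ d * (\<Sum>x\<in>UNIV. \<psi> (T x) * w x) \<in> quad_subfield p
        \<and> (even k \<and> k dvd d \<longrightarrow> -1 / gauss_Fp p \<psi> ^ d * (\<Sum>x\<in>UNIV. \<psi> (T x) * w x) \<in> \<rat>)"
      if "\<And>x. w x \<in> \<rat>" and "\<And>t x. t \<noteq> 0 \<Longrightarrow> w (t ^ 2 * x) = w x" for w
      by (rule normalized_homogeneous_character_sum[OF assms(4) T_Fp]) (use T_scale that in auto)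
    from this[of "\<lambda>_. 1"] this[OF quad_char_in_Rats quad_char_square_mult]
    show ?thesis unfolding sums by simp
  qed
qed

end
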